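(* Let $A=\sigma(R)\langle x_1,\dots,x_n\rangle$ be a quasi-commutative bijective $\sigma$-PBW extension of a left Noetherian ring $R$. Let $c_1,\dots,c_t\in R\setminus\{0\}$ and let $\mathbf X_1=X_1\mathbf e_{i_1},\dots,\mathbf X_t=X_t\mathbf e_{i_t}$ be monomials of $A^m$ (the indices $i_1,\dots,i_t\in\{1,\dots,m\}$ need not be distinct). Let $L=[c_1\mathbf X_1\ \cdots\ c_t\mathbf X_t]$ and $$\mathrm{Syz}(L)=\{(h_1,\dots,h_t)^T\in A^t:\ h_1c_1\mathbf X_1+\dots+h_tc_t\mathbf X_t=\mathbf 0\}.$$ Then $\mathrm{Syz}(L)$ has a finite generating set consisting of homogeneous syzygies.
   Context: Let $R\subseteq A$ be rings. $A$ is a $\sigma$-PBW extension of $R$, written $A=\sigma(R)\langle x_1,\dots,x_n\rangle$, if there are $x_1,\dots,x_n\in A\setminus R$ such that: (i) $A$ is a free left $R$-module with basis $\mathrm{Mon}(A)=\{x^\alpha=x_1^{\alpha_1}\cdots x_n^{\alpha_n}:\alpha\in\mathbb N^n\}$, with $x^0=1$; (ii) for every $i$ and every $r\in R\setminus\{0\}$ there is $c_{i,r}\in R\setminus\{0\}$ with $x_ir-c_{i,r}x_i\in R$; (iii) for all $i,j$ there is $c_{i,j}\in R\setminus\{0\}$ with $x_jx_i-c_{i,j}x_ix_j\in R+Rx_1+\dots+Rx_n$. There are injective ring endomorphisms $\sigma_i$ of $R$ with $x_ir=\sigma_i(r)x_i+\delta_i(r)$, where $\delta_i$ are $\sigma_i$-derivations.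 $A$ is quasi-commutative if $x_ir=c_{i,r}x_i$ and $x_jx_i=c_{i,j}x_ix_j$ exactly. $A$ is bijective if each $\sigma_i$ is bijective and $c_{i,j}$ is invertible for $i<j$. $\mathrm{Mon}(A)$ carries a monomial order, i.e. a total order $\succeq$ with: - $x^\beta\succeq x^\alpha\Rightarrow lm(x^\gamma x^\beta x^\lambda)\succeq lm(x^\gamma x^\alpha x^\lambda)$; - $x^\alpha\succeq1$; - degree compatibility. $lm$ denotes the leading monomial; $lm(x^\alpha x^\beta)=x^{\alpha+\beta}$. $A^m$ is the free left $A$-module of column vectors with canonical basis $\mathbf e_1,\dots,\mathbf e_m$. Monomials of $A^m$ are $X\mathbf e_i$ with $X\in\mathrm{Mon}(A)$. A term of $A$ is an element $cx^\alpha$ with $c\in R$. A syzygy $\mathbf h=(h_1,\dots,h_t)^T\in\mathrm{Syz}(L)$ is homogeneous of degree $\mathbf X=X\mathbf e_i$ ($X\in\mathrm{Mon}(A)$) if: - each $h_j$ is a term; - for each $j$, either $h_j=0$ or $lm(lm(h_j)\mathbf X_j)=\mathbf X$, where $lm(x^\gamma\cdot x^\alpha\mathbf e_i)=x^{\gamma+\alpha}\mathbf e_i$. *)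

theory Defs
  imports Main
begin

text \<open>The ring A is modelled as the whole type 'a (a possibly noncommutative ring_1),
  R as a subset of it. Variables x_1..x_n are x 0, ..., x (n-1).\<close>

definition subring :: "'a::ring_1 set \<Rightarrow> bool" where
  "subring R \<longleftrightarrow> 0 \<in> R \<and> 1 \<in> R \<and> (\<forall>a\<in>R. \<forall>b\<in>R. a + b \<in> R \<and> a * b \<in> R \<and> - a \<in> R)"

definition Exps :: "nat \<Rightarrow> (nat \<Rightarrow> nat) set" where
  "Exps n = {\<alpha>. \<forall>i\<ge>n. \<alpha> i = 0}"

definition mono :: "(nat \<Rightarrow> 'a::ring_1) \<Rightarrow> nat \<Rightarrow> (nat \<Rightarrow> nat) \<Rightarrow> 'a" where
  "mono x n \<alpha> = prod_list (map (\<lambda>i. x i ^ \<alpha> i) [0..<n])"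

definition left_ideal_of :: "'a::ring_1 set \<Rightarrow> 'a set \<Rightarrow> bool" where
  "left_ideal_of R I \<longleftrightarrow> I \<subseteq> R \<and> 0 \<in> I \<and> (\<forall>a\<in>I. \<forall>b\<in>I. a + b \<in> I) \<and>
     (\<forall>r\<in>R. \<forall>a\<in>I. r * a \<in> I)"

definition left_noetherian :: "'a::ring_1 set \<Rightarrow> bool" where
  "left_noetherian R \<longleftrightarrow> (\<forall>I. left_ideal_of R I \<longrightarrow>
     (\<exists>F. finite F \<and> F \<subseteq> I \<and> I = {\<Sum>f\<in>F. r f * f | r. \<forall>f\<in>F. r f \<in> R}))"

definition sigma_PBW :: "'a::ring_1 set \<Rightarrow> nat \<Rightarrow> (nat \<Rightarrow> 'a) \<Rightarrow> bool" where
  "sigma_PBW R n x \<longleftrightarrow> subring R \<and>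
     (\<forall>i<n. x i \<notin> R) \<and>
     \<comment> \<open>(i) Mon(A) is a basis of A as a free left R-module\<close>
     (\<forall>a. \<exists>c. (\<forall>\<alpha>. c \<alpha> \<in> R) \<and> finite {\<alpha>. c \<alpha> \<noteq> 0} \<and> {\<alpha>. c \<alpha> \<noteq> 0} \<subseteq> Exps n \<and>
            a = (\<Sum>\<alpha>\<in>{\<alpha>. c \<alpha> \<noteq> 0}. c \<alpha> * mono x n \<alpha>)) \<and>
     (\<forall>c. (\<forall>\<alpha>. c \<alpha> \<in> R) \<and> finite {\<alpha>. c \<alpha> \<noteq> 0} \<and> {\<alpha>. c \<alpha> \<noteq> 0} \<subseteq> Exps n \<and>
            (\<Sum>\<alpha>\<in>{\<alpha>. c \<alpha> \<noteq> 0}. c \<alpha> * mono x n \<alpha>) = 0 \<longrightarrow> (\<forall>\<alpha>. c \<alpha> = 0)) \<and>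
     \<comment> \<open>(ii)\<close>
     (\<forall>i<n. \<forall>r\<in>R - {0}. \<exists>c\<in>R - {0}. x i * r - c * x i \<in> R) \<and>
     \<comment> \<open>(iii)\<close>
     (\<forall>i<n. \<forall>j<n. \<exists>c\<in>R - {0}. \<exists>r0\<in>R. \<exists>r. (\<forall>k<n. r k \<in> R) \<and>
            x j * x i - c * x i * x j = r0 + (\<Sum>k<n. r k * x k))"

definition quasi_commutative :: "'a::ring_1 set \<Rightarrow> nat \<Rightarrow> (nat \<Rightarrow> 'a) \<Rightarrow> bool" where
  "quasi_commutative R n x \<longleftrightarrow>
     (\<forall>i<n. \<forall>r\<in>R - {0}. \<exists>c\<in>R - {0}. x i * r = c * x i) \<and>
     (\<forall>i<n. \<forall>j<n. \<exists>c\<in>R - {0}. x j * x i = c * x i * x j)"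

text \<open>Bijective: each sigma_i (determined by x_i r - sigma_i(r) x_i in R, unique by (i)) is
  bijective on R, and each c_{i,j} (i<j) is invertible in R.\<close>
definition bijective_PBW :: "'a::ring_1 set \<Rightarrow> nat \<Rightarrow> (nat \<Rightarrow> 'a) \<Rightarrow> bool" where
  "bijective_PBW R n x \<longleftrightarrow>
     (\<forall>i<n. \<exists>\<sigma>. bij_betw \<sigma> R R \<and> (\<forall>r\<in>R. x i * r - \<sigma> r * x i \<in> R)) \<and>
     (\<forall>i j. i < j \<and> j < n \<longrightarrow> (\<forall>c\<in>R - {0}.
        (\<exists>r0\<in>R. \<exists>r. (\<forall>k<n. r k \<in> R) \<and> x j * x i - c * x i * x j = r0 + (\<Sum>k<n. r k * x k))
        \<longrightarrow> (\<exists>d\<in>R. c * d = 1 \<and> d * c = 1)))"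

text \<open>Vectors of A^t as functions nat => 'a vanishing from index t on.
  The generators are L = [c_1 X_1 ... c_t X_t] with X_j = x^(alpha j) e_(idx j)
  (0-based indices, idx j < m).  lin_comb gives h_1 c_1 X_1 + ... + h_t c_t X_t in A^m.\<close>
definition lin_comb :: "(nat \<Rightarrow> 'a::ring_1) \<Rightarrow> nat \<Rightarrow> nat \<Rightarrow> (nat \<Rightarrow> 'a) \<Rightarrow> (nat \<Rightarrow> nat \<Rightarrow> nat)
     \<Rightarrow> (nat \<Rightarrow> nat) \<Rightarrow> (nat \<Rightarrow> 'a) \<Rightarrow> (nat \<Rightarrow> 'a)" where
  "lin_comb x n t c alpha idx h =
     (\<lambda>k. \<Sum>j<t. h j * (c j * (if idx j = k then mono x n (alpha j) else 0)))"

definition Syz :: "(nat \<Rightarrow> 'a::ring_1) \<Rightarrow> nat \<Rightarrow> nat \<Rightarrow> (nat \<Rightarrow> 'a) \<Rightarrow> (nat \<Rightarrow> nat \<Rightarrow> nat)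
     \<Rightarrow> (nat \<Rightarrow> nat) \<Rightarrow> (nat \<Rightarrow> 'a) set" where
  "Syz x n t c alpha idx = {h. (\<forall>j\<ge>t. h j = 0) \<and> lin_comb x n t c alpha idx h = (\<lambda>k. 0)}"

text \<open>h is homogeneous of degree x^beta e_k: each h_j is a term r x^gamma, and if h_j \<noteq> 0
  then lm(lm(h_j) X_j) = x^(gamma + alpha_j) e_(idx j) = x^beta e_k.\<close>
definition homogeneous_of_degree :: "'a::ring_1 set \<Rightarrow> (nat \<Rightarrow> 'a) \<Rightarrow> nat \<Rightarrow> nat
     \<Rightarrow> (nat \<Rightarrow> nat \<Rightarrow> nat) \<Rightarrow> (nat \<Rightarrow> nat) \<Rightarrow> (nat \<Rightarrow> nat) \<Rightarrow> nat \<Rightarrow> (nat \<Rightarrow> 'a) \<Rightarrow> bool" where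
  "homogeneous_of_degree R x n t alpha idx \<beta> k h \<longleftrightarrow>
     (\<forall>j<t. (\<exists>r\<in>R. \<exists>\<gamma>\<in>Exps n. h j = r * mono x n \<gamma>) \<and>
            (h j = 0 \<or> (\<exists>r\<in>R. \<exists>\<gamma>\<in>Exps n. h j = r * mono x n \<gamma> \<and> r \<noteq> 0 \<and>
                          idx j = k \<and> (\<lambda>i. \<gamma> i + alpha j i) = \<beta>)))"

definition homogeneous_syz :: "'a::ring_1 set \<Rightarrow> (nat \<Rightarrow> 'a) \<Rightarrow> nat \<Rightarrow> nat \<Rightarrow> nat
     \<Rightarrow> (nat \<Rightarrow> nat \<Rightarrow> nat) \<Rightarrow> (nat \<Rightarrow> nat) \<Rightarrow> (nat \<Rightarrow> 'a) \<Rightarrow> bool" where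
  "homogeneous_syz R x n m t alpha idx h \<longleftrightarrow>
     (\<exists>\<beta>\<in>Exps n. \<exists>k<m. homogeneous_of_degree R x n t alpha idx \<beta> k h)"

end

theory Submission
  imports Defs
begin

text \<open>
  In a quasi-commutative bijective extension each monomial x^\<gamma> skew-commutes with R through a
  bijection of R that preserves units, and x^\<gamma> x^\<alpha> = u x^(\<gamma>+\<alpha>) with u a unit of R.
  Consequently the part of a syzygy of each degree x^\<beta> e_k is again a syzygy, so it suffices
  to generate the homogeneous syzygies. A homogeneous syzygy of degree x^\<beta> e_k is
  x^(\<beta>-\<beta>') times one of degree x^\<beta>' e_k, where \<beta>' is the least common multiple of the
  exponents alpha j that divide \<beta> and belong to the component k; only finitely many \<beta>'
  occur. For a fixed degree, the homogeneous syzygies are determined by their coefficient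
  vectors, which form a left R-submodule of R^t, finitely generated since R is left Noetherian.
\<close>

section \<open>Finitely generated submodules of R^J\<close>

definition lcomb :: "(('i \<Rightarrow> 'a) \<Rightarrow> 'a) \<Rightarrow> ('i \<Rightarrow> 'a) set \<Rightarrow> 'i \<Rightarrow> 'a::semiring_0" where
  "lcomb r F = (\<lambda>j. \<Sum>f\<in>F. r f * f j)"

definition generates :: "'a::semiring_0 set \<Rightarrow> ('i \<Rightarrow> 'a) set \<Rightarrow> ('i \<Rightarrow> 'a) set \<Rightarrow> bool" where
  "generates R F N \<longleftrightarrow> (\<forall>v\<in>N. \<exists>r. (\<forall>f. r f \<in> R) \<and> v = lcomb r F)"

definition left_submodule :: "'a::semiring_0 set \<Rightarrow> ('i \<Rightarrow> 'a) set \<Rightarrow> bool" where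
  "left_submodule R N \<longleftrightarrow> (\<lambda>_. 0) \<in> N \<and> (\<forall>v\<in>N. \<forall>w\<in>N. (\<lambda>j. v j + w j) \<in> N) \<and>
     (\<forall>r\<in>R. \<forall>v\<in>N. (\<lambda>j. r * v j) \<in> N)"

lemma lcomb_extend:
  assumes "finite S" "G \<subseteq> S"
  shows "lcomb a G = lcomb (\<lambda>s. if s \<in> G then a s else 0) S"
proof
  fix j
  have "(\<Sum>s\<in>S. (if s \<in> G then a s else 0) * s j) = (\<Sum>s\<in>S. if s \<in> G then a s * s j else 0)"
    by (intro sum.cong) auto
  also have "\<dots> = (\<Sum>s\<in>S \<inter> G. a s * s j)"
    using assms(1) by (simp add: sum.inter_restrict)
  also have "S \<inter> G = G" using assms(2) by blast
  finally show "lcomb a G j = lcomb (\<lambda>s. if s \<in> G then a s else 0) S j"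
    by (simp add: lcomb_def)
qed

lemma lcomb_union:
  assumes "finite A" "finite B"
  shows "(\<lambda>j. lcomb a A j + lcomb b B j) =
    lcomb (\<lambda>f. (if f \<in> A then a f else 0) + (if f \<in> B then b f else 0)) (A \<union> B)"
  using lcomb_extend[where G=A and S="A \<union> B" and a=a] lcomb_extend[where G=B and S="A \<union> B" and a=b] assms
  by (simp add: lcomb_def fun_eq_iff distrib_right sum.distrib)

lemma lcomb_image:
  assumes "finite F"
  shows "(\<lambda>j. \<Sum>f\<in>F. r f * e f j) = lcomb (\<lambda>g. \<Sum>f\<in>{f\<in>F. e f = g}. r f) (e ` F)"
proof
  fix j
  have "(\<Sum>f\<in>F. r f * e f j) = (\<Sum>g\<in>e ` F. \<Sum>f\<in>{f\<in>F. e f = g}. r f * e f j)"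
    by (rule sum.group[symmetric]) (use assms in auto)
  also have "\<dots> = lcomb (\<lambda>g. \<Sum>f\<in>{f\<in>F. e f = g}. r f) (e ` F) j"
    by (auto simp: lcomb_def sum_distrib_right intro!: sum.cong)
  finally show "(\<Sum>f\<in>F. r f * e f j) = lcomb (\<lambda>g. \<Sum>f\<in>{f\<in>F. e f = g}. r f) (e ` F) j" .
qed

lemma lcomb_scale:
  fixes a :: "'a::semiring_0"
  shows "(\<lambda>j. a * lcomb r F j) = lcomb (\<lambda>f. a * r f) F"
  by (simp add: lcomb_def sum_distrib_left mult.assoc)

lemma sum_lcomb: "(\<Sum>p\<in>P. lcomb (a p) F j) = lcomb (\<lambda>f. \<Sum>p\<in>P. a p f) F j"
  unfolding lcomb_def by (simp add: sum_distrib_right sum.swap[of _ P])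

context
  fixes R :: "'a::ring_1 set"
  assumes R: "subring R"
begin

lemma subring_0 [simp]: "0 \<in> R" and subring_1 [simp]: "1 \<in> R"
  and subring_add: "a \<in> R \<Longrightarrow> b \<in> R \<Longrightarrow> a + b \<in> R"
  and subring_mult: "a \<in> R \<Longrightarrow> b \<in> R \<Longrightarrow> a * b \<in> R"
  and subring_uminus: "a \<in> R \<Longrightarrow> - a \<in> R"
  using R unfolding subring_def by auto

lemma subring_diff: "a \<in> R \<Longrightarrow> b \<in> R \<Longrightarrow> a - b \<in> R"
  using subring_add subring_uminus by (metis diff_conv_add_uminus)

lemma subring_sum: "(\<And>i. i \<in> F \<Longrightarrow> f i \<in> R) \<Longrightarrow> sum f F \<in> R"
  by (induction F rule: infinite_finite_induct) (auto intro: subring_add)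

lemma left_submodule_add:
  "left_submodule R N \<Longrightarrow> v \<in> N \<Longrightarrow> w \<in> N \<Longrightarrow> (\<lambda>j. v j + w j) \<in> N"
  unfolding left_submodule_def by blast

lemma left_submodule_smult:
  "left_submodule R N \<Longrightarrow> r \<in> R \<Longrightarrow> v \<in> N \<Longrightarrow> (\<lambda>j. r * v j) \<in> N"
  unfolding left_submodule_def by blast

lemma lcomb_in_left_submodule:
  assumes N: "left_submodule R N" and "finite F" "F \<subseteq> N" "\<forall>f\<in>F. r f \<in> R"
  shows "lcomb r F \<in> N"
  using assms(2-)
proof (induction F rule: finite_induct)
  case empty
  then show ?case using N by (simp add: lcomb_def left_submodule_def)
next
  case (insert f F)
  then have "(\<lambda>j. r f * f j + lcomb r F j) \<in> N"
    using N by (intro left_submodule_add left_submodule_smult) auto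
  then show ?case using insert.hyps by (simp add: lcomb_def)
qed

lemma left_ideal_of_projection:
  assumes "left_submodule R N" "\<forall>v\<in>N. v i \<in> R"
  shows "left_ideal_of R ((\<lambda>v. v i) ` N)"
  unfolding left_ideal_of_def
proof (intro conjI ballI)
  fix a b assume "a \<in> (\<lambda>v. v i) ` N" "b \<in> (\<lambda>v. v i) ` N"
  then obtain v w where "v \<in> N" "w \<in> N" "a = v i" "b = w i" by blast
  then show "a + b \<in> (\<lambda>v. v i) ` N"
    using assms(1) by (intro image_eqI[of _ _ "\<lambda>j. v j + w j"]) (auto simp: left_submodule_def)
next
  fix r a assume "r \<in> R" "a \<in> (\<lambda>v. v i) ` N"
  then obtain v where "v \<in> N" "a = v i" by blast
  then show "r * a \<in> (\<lambda>v. v i) ` N"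
    using assms(1) \<open>r \<in> R\<close> by (intro image_eqI[of _ _ "\<lambda>j. r * v j"]) (auto simp: left_submodule_def)
qed (use assms in \<open>force simp: left_submodule_def\<close>)+

lemma left_submodule_kernel:
  "left_submodule R N \<Longrightarrow> left_submodule R {v\<in>N. v i = 0}"
  by (simp add: left_submodule_def)

text \<open>Induction on the support J: the i-th coordinates of N form a finitely generated left ideal
  of R, and lifts of its generators together with generators of the kernel of the i-th
  coordinate generate N.\<close>
theorem left_noetherian_submodule_finitely_generated:
  assumes noeth: "left_noetherian R" and "finite J" and "left_submodule R N"
    and "\<forall>v\<in>N. \<forall>j. v j \<in> R \<and> (j \<notin> J \<longrightarrow> v j = 0)"
  shows "\<exists>F. finite F \<and> F \<subseteq> N \<and> generates R F N"
  using assms(2-)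
proof (induction J arbitrary: N rule: finite_induct)
  case empty
  then have "N \<subseteq> {\<lambda>_. 0}" by auto
  then show ?case by (intro exI[of _ "{}"]) (auto simp: generates_def lcomb_def intro: exI[of _ "\<lambda>_. 0"])
next
  case (insert i J)
  define I where "I = (\<lambda>v. v i) ` N"
  have "left_ideal_of R I"
    unfolding I_def using insert.prems by (intro left_ideal_of_projection) auto
  then have "\<exists>F. finite F \<and> F \<subseteq> I \<and> I = {\<Sum>f\<in>F. r f * f | r. \<forall>f\<in>F. r f \<in> R}"
    by (rule noeth[unfolded left_noetherian_def, rule_format])
  then obtain F0 where F0: "finite F0" "F0 \<subseteq> I" "I = {\<Sum>f\<in>F0. r f * f | r. \<forall>f\<in>F0. r f \<in> R}"
    by (elim exE conjE)
  have "\<forall>f\<in>F0. \<exists>v. v \<in> N \<and> v i = f" using F0(2) unfolding I_def by blast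
  then obtain w where w: "\<forall>f\<in>F0. w f \<in> N \<and> w f i = f" by (rule bchoice[elim_format]) blast
  define N' where "N' = {v\<in>N. v i = 0}"
  have "left_submodule R N'"
    unfolding N'_def by (rule left_submodule_kernel[OF insert.prems(1)])
  moreover have "\<forall>v\<in>N'. \<forall>j. v j \<in> R \<and> (j \<notin> J \<longrightarrow> v j = 0)"
  proof (intro ballI allI)
    fix v j assume "v \<in> N'"
    then show "v j \<in> R \<and> (j \<notin> J \<longrightarrow> v j = 0)"
      using insert.prems(2) unfolding N'_def by (cases "j = i") auto
  qed
  ultimately have "\<exists>F. finite F \<and> F \<subseteq> N' \<and> generates R F N'"
    by (rule insert.IH)
  then obtain F' where F': "finite F'" "F' \<subseteq> N'" "generates R F' N'"
    by blast
  show ?case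
  proof (intro exI[of _ "w ` F0 \<union> F'"] conjI)
    show "finite (w ` F0 \<union> F')" using F0(1) F'(1) by blast
    show "w ` F0 \<union> F' \<subseteq> N" using w F'(2) unfolding N'_def by blast
    show "generates R (w ` F0 \<union> F') N"
      unfolding generates_def
    proof
      fix v assume v: "v \<in> N"
      then have "v i \<in> I" unfolding I_def by (rule imageI)
      then obtain r where r: "\<forall>f\<in>F0. r f \<in> R" "v i = (\<Sum>f\<in>F0. r f * f)"
        unfolding F0(3) by (elim CollectE exE conjE) simp
      define a where "a g = (\<Sum>f\<in>{f\<in>F0. w f = g}. r f)" for g
      have aR: "a g \<in> R" for g unfolding a_def using r(1) by (auto intro: subring_sum)
      have z: "(\<lambda>j. \<Sum>f\<in>F0. r f * w f j) = lcomb a (w ` F0)"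
        unfolding a_def by (rule lcomb_image[OF F0(1)])
      have zN: "lcomb a (w ` F0) \<in> N"
        using insert.prems(1) F0(1) w aR by (intro lcomb_in_left_submodule) auto
      have zi: "lcomb a (w ` F0) i = v i"
        using fun_cong[OF z, of i] w r(2) by (metis (no_types, lifting) sum.cong)
      define v' where "v' = (\<lambda>j. v j + (- 1) * lcomb a (w ` F0) j)"
      have "v' \<in> N"
        unfolding v'_def using insert.prems(1) v zN subring_uminus[OF subring_1]
        by (intro left_submodule_add left_submodule_smult)
      then have "v' \<in> N'"
        unfolding N'_def using zi by (simp add: v'_def)
      then obtain b where b: "\<forall>f. b f \<in> R" "v' = lcomb b F'"
        using F'(3) unfolding generates_def by blast
      have "v = (\<lambda>j. lcomb a (w ` F0) j + lcomb b F' j)"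
        using b(2) unfolding v'_def by (simp add: fun_eq_iff algebra_simps)
      also have "\<dots> = lcomb (\<lambda>f. (if f \<in> w ` F0 then a f else 0) + (if f \<in> F' then b f else 0))
                         (w ` F0 \<union> F')"
        using F0(1) F'(1) by (intro lcomb_union) auto
      finally show "\<exists>c. (\<forall>f. c f \<in> R) \<and> v = lcomb c (w ` F0 \<union> F')"
        using aR b(1) by (intro exI conjI) (auto intro: subring_add)
    qed
  qed
qed

end

section \<open>Skew-commutation with the coefficient ring\<close>

definition unit_in :: "'a::ring_1 set \<Rightarrow> 'a \<Rightarrow> bool" where
  "unit_in R u \<longleftrightarrow> u \<in> R \<and> (\<exists>v\<in>R. u * v = 1 \<and> v * u = 1)"

text \<open>For y = x i these are the automorphisms \<sigma>_i of the extension; being closed under products,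
  the notion carries them over to all monomials.\<close>
definition scalar_twist :: "'a::ring_1 set \<Rightarrow> 'a \<Rightarrow> ('a \<Rightarrow> 'a) \<Rightarrow> bool" where
  "scalar_twist R y \<sigma> \<longleftrightarrow> bij_betw \<sigma> R R \<and> \<sigma> 0 = 0 \<and> (\<forall>u. unit_in R u \<longrightarrow> unit_in R (\<sigma> u)) \<and>
     (\<forall>r\<in>R. y * r = \<sigma> r * y)"

definition commutes_up_to_unit :: "'a::ring_1 set \<Rightarrow> 'a \<Rightarrow> 'a \<Rightarrow> bool" where
  "commutes_up_to_unit R y w \<longleftrightarrow> (\<exists>u. unit_in R u \<and> y * w = u * w * y)"

lemma unit_in_1: "subring R \<Longrightarrow> unit_in R 1"
  by (auto simp: unit_in_def)

lemma unit_in_mult: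
  assumes "subring R" "unit_in R a" "unit_in R b"
  shows "unit_in R (a * b)"
proof -
  obtain a' b' where "a' \<in> R" "a * a' = 1" "a' * a = 1" "b' \<in> R" "b * b' = 1" "b' * b = 1"
    using assms(2,3) unfolding unit_in_def by blast
  then have "a * b * (b' * a') = 1" "b' * a' * (a * b) = 1"
    by (metis mult.assoc mult_1_right)+
  then show ?thesis
    using assms \<open>a' \<in> R\<close> \<open>b' \<in> R\<close> unfolding unit_in_def by (blast intro: subring_mult)
qed

lemma unit_in_inverse: "unit_in R u \<Longrightarrow> \<exists>v. unit_in R v \<and> v * u = 1 \<and> u * v = 1"
  unfolding unit_in_def by blast

lemma unit_in_right_cancel: "unit_in R u \<Longrightarrow> r * u = 0 \<Longrightarrow> r = 0"
  unfolding unit_in_def by (metis mult.assoc mult_1_right mult_zero_left)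

lemma scalar_twist_commute: "scalar_twist R y \<sigma> \<Longrightarrow> r \<in> R \<Longrightarrow> y * r = \<sigma> r * y"
  and scalar_twist_in: "scalar_twist R y \<sigma> \<Longrightarrow> r \<in> R \<Longrightarrow> \<sigma> r \<in> R"
  and scalar_twist_unit: "scalar_twist R y \<sigma> \<Longrightarrow> unit_in R u \<Longrightarrow> unit_in R (\<sigma> u)"
  unfolding scalar_twist_def bij_betw_def by blast+

lemma scalar_twist_1: "scalar_twist R 1 id"
  by (simp add: scalar_twist_def)

lemma scalar_twist_mult:
  assumes "scalar_twist R y \<sigma>" "scalar_twist R z \<tau>"
  shows "scalar_twist R (y * z) (\<sigma> \<circ> \<tau>)"
proof -
  have "y * z * r = \<sigma> (\<tau> r) * (y * z)" if "r \<in> R" for r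
  proof -
    have "y * z * r = (y * \<tau> r) * z" using scalar_twist_commute[OF assms(2) that] by (simp add: mult.assoc)
    also have "\<dots> = \<sigma> (\<tau> r) * (y * z)"
      using scalar_twist_commute[OF assms(1) scalar_twist_in[OF assms(2) that]] by (simp add: mult.assoc)
    finally show ?thesis .
  qed
  then show ?thesis
    using assms unfolding scalar_twist_def by (auto intro: bij_betw_trans)
qed

lemma commutes_up_to_unit_1: "subring R \<Longrightarrow> commutes_up_to_unit R 1 w"
  unfolding commutes_up_to_unit_def using unit_in_1 by fastforce

lemma commutes_up_to_unit_mult:
  assumes R: "subring R" and y: "scalar_twist R y \<sigma>" "commutes_up_to_unit R y w"
    and z: "commutes_up_to_unit R z w"
  shows "commutes_up_to_unit R (y * z) w"
proof -
  obtain u where u: "unit_in R u" "z * w = u * w * z"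
    using z unfolding commutes_up_to_unit_def by blast
  obtain v where v: "unit_in R v" "y * w = v * w * y"
    using y(2) unfolding commutes_up_to_unit_def by blast
  have "u \<in> R" using u(1) unfolding unit_in_def by blast
  have "y * z * w = y * u * w * z" by (simp add: u(2) mult.assoc)
  also have "\<dots> = \<sigma> u * (y * w) * z"
    using scalar_twist_commute[OF y(1) \<open>u \<in> R\<close>] by (simp add: mult.assoc)
  also have "\<dots> = (\<sigma> u * v) * w * (y * z)" by (simp add: v(2) mult.assoc)
  finally show ?thesis
    unfolding commutes_up_to_unit_def
    using unit_in_mult[OF R scalar_twist_unit[OF y(1) u(1)] v(1)] by blast
qed

section \<open>Monomials of a quasi-commutative bijective extension\<close>

lemma prod_list_map_closed:
  assumes "P 1" "\<And>a b. P a \<Longrightarrow> P b \<Longrightarrow> P (a * b)" "\<forall>k\<in>set ks. P (f k)"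
  shows "P (prod_list (map f ks))"
  using assms(3) by (induction ks) (auto intro: assms(1,2))

lemma power_closed:
  assumes "P 1" "\<And>a b. P a \<Longrightarrow> P b \<Longrightarrow> P (a * b)" "P y"
  shows "P (y ^ k)"
  by (induction k) (auto intro: assms)

lemma Exps_0 [simp]: "(\<lambda>_. 0) \<in> Exps n"
  and Exps_add: "a \<in> Exps n \<Longrightarrow> b \<in> Exps n \<Longrightarrow> (\<lambda>i. a i + b i) \<in> Exps n"
  and Exps_diff: "a \<in> Exps n \<Longrightarrow> (\<lambda>i. a i - b i) \<in> Exps n"
  and Exps_update: "a \<in> Exps n \<Longrightarrow> i < n \<Longrightarrow> a(i := k) \<in> Exps n"
  unfolding Exps_def by auto

lemma mono_0: "mono x n (\<lambda>_. 0) = 1"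
  unfolding mono_def by (induction n) auto

lemma mono_split:
  assumes "i < n"
  shows "mono x n g = prod_list (map (\<lambda>k. x k ^ g k) [0..<i]) * x i ^ g i
                      * prod_list (map (\<lambda>k. x k ^ g k) [Suc i..<n])"
proof -
  have "[0..<n] = [0..<i] @ i # [Suc i..<n]"
    using assms upt_add_eq_append[of 0 i "n - i"] upt_conv_Cons[OF assms] by simp
  then show ?thesis unfolding mono_def by (simp add: mult.assoc)
qed

lemma mono_var: "i < n \<Longrightarrow> mono x n (\<lambda>k. if k = i then 1 else 0) = x i"
  by (subst mono_split[of i]) (auto simp: prod_list_map_closed[where P="\<lambda>y. y = 1"])

locale quasi_commutative_bijective_PBW =
  fixes R :: "'a::ring_1 set" and n :: nat and x :: "nat \<Rightarrow> 'a"
  assumes sigma_PBW: "sigma_PBW R n x" and quasi_commutative: "quasi_commutative R n x"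
    and bijective: "bijective_PBW R n x"
begin

abbreviation M :: "(nat \<Rightarrow> nat) \<Rightarrow> 'a" where "M \<equiv> mono x n"

lemma subring: "subring R"
  using sigma_PBW unfolding sigma_PBW_def by (elim conjE)

lemma mono_spanning:
  "\<exists>c. (\<forall>\<alpha>. c \<alpha> \<in> R) \<and> finite {\<alpha>. c \<alpha> \<noteq> 0} \<and> {\<alpha>. c \<alpha> \<noteq> 0} \<subseteq> Exps n \<and>
       a = (\<Sum>\<alpha>\<in>{\<alpha>. c \<alpha> \<noteq> 0}. c \<alpha> * M \<alpha>)"
  using sigma_PBW unfolding sigma_PBW_def by (elim conjE allE)

lemma mono_coeffs_unique:
  "\<forall>c. (\<forall>\<alpha>. c \<alpha> \<in> R) \<and> finite {\<alpha>. c \<alpha> \<noteq> 0} \<and> {\<alpha>. c \<alpha> \<noteq> 0} \<subseteq> Exps n \<and>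
      (\<Sum>\<alpha>\<in>{\<alpha>. c \<alpha> \<noteq> 0}. c \<alpha> * M \<alpha>) = 0 \<longrightarrow> (\<forall>\<alpha>. c \<alpha> = 0)"
  using sigma_PBW unfolding sigma_PBW_def by (elim conjE)

lemma mono_independent:
  assumes "finite F" "F \<subseteq> Exps n" "\<forall>\<alpha>\<in>F. d \<alpha> \<in> R" "(\<Sum>\<alpha>\<in>F. d \<alpha> * M \<alpha>) = 0"
  shows "\<forall>\<alpha>\<in>F. d \<alpha> = 0"
proof -
  define c where "c \<alpha> = (if \<alpha> \<in> F then d \<alpha> else 0)" for \<alpha>
  have supp: "{\<alpha>. c \<alpha> \<noteq> 0} \<subseteq> F" unfolding c_def by auto
  have "(\<Sum>\<alpha>\<in>{\<alpha>. c \<alpha> \<noteq> 0}. c \<alpha> * M \<alpha>) = (\<Sum>\<alpha>\<in>F. c \<alpha> * M \<alpha>)"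
    by (rule sum.mono_neutral_left[OF assms(1) supp]) auto
  also have "\<dots> = 0" using assms(4) unfolding c_def by simp
  finally have "\<forall>\<alpha>. c \<alpha> = 0"
    using mono_coeffs_unique[rule_format, of c] finite_subset[OF supp assms(1)] supp assms(2,3)
      subring_0[OF subring]
    unfolding c_def by (meson order_trans)
  then show ?thesis unfolding c_def by (metis (full_types))
qed

lemma term_nonzero: "r \<in> R \<Longrightarrow> r \<noteq> 0 \<Longrightarrow> \<gamma> \<in> Exps n \<Longrightarrow> r * M \<gamma> \<noteq> 0"
  using mono_independent[of "{\<gamma>}" "\<lambda>_. r"] by auto

lemma var_coeff_eq_0:
  assumes "a \<in> R" "i < n" "a * x i \<in> R"
  shows "a = 0"
proof -
  define e where "e = (\<lambda>k. if k = i then 1 else 0 :: nat)"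
  have "e i \<noteq> 0" unfolding e_def by simp
  then have ne: "e \<noteq> (\<lambda>_. 0)" by force
  have e: "e \<in> Exps n" unfolding e_def Exps_def using assms(2) by simp
  have Me: "M e = x i" unfolding e_def by (rule mono_var[OF assms(2)])
  define d where "d \<alpha> = (if \<alpha> = e then a else - (a * x i))" for \<alpha>
  have "(\<Sum>\<alpha>\<in>{e, \<lambda>_. 0}. d \<alpha> * M \<alpha>) = d e * M e + d (\<lambda>_. 0) * M (\<lambda>_. 0)"
    using ne by simp
  also have "\<dots> = 0" using ne by (simp add: d_def Me mono_0)
  finally have "(\<Sum>\<alpha>\<in>{e, \<lambda>_. 0}. d \<alpha> * M \<alpha>) = 0" .
  moreover have "\<forall>\<alpha>\<in>{e, \<lambda>_. 0}. d \<alpha> \<in> R"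
    using assms(1,3) subring_uminus[OF subring] unfolding d_def by simp
  ultimately have "\<forall>\<alpha>\<in>{e, \<lambda>_. 0}. d \<alpha> = 0"
    using e by (intro mono_independent) auto
  then show ?thesis unfolding d_def by simp
qed

lemma var_right_cancel:
  assumes "a \<in> R" "b \<in> R" "i < n" "a * x i = b * x i"
  shows "a = b"
proof -
  have "(a - b) * x i \<in> R" using assms(4) subring_0[OF subring] by (simp add: left_diff_distrib)
  then show ?thesis using var_coeff_eq_0[of "a - b" i] subring_diff[OF subring] assms by simp
qed

lemma var_twist:
  "\<forall>i<n. \<exists>\<sigma>. bij_betw \<sigma> R R \<and> (\<forall>r\<in>R. x i * r - \<sigma> r * x i \<in> R)"
  using bijective unfolding bijective_PBW_def by (elim conjE)

lemma var_scalar_quasi_commute: "\<forall>i<n. \<forall>r\<in>R - {0}. \<exists>c\<in>R - {0}. x i * r = c * x i"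
  using quasi_commutative unfolding quasi_commutative_def by (elim conjE)

lemma var_scalar_twist:
  assumes i: "i < n"
  shows "\<exists>\<sigma>. scalar_twist R (x i) \<sigma>"
proof -
  note R = subring
  obtain \<sigma> where \<sigma>: "bij_betw \<sigma> R R" "\<forall>r\<in>R. x i * r - \<sigma> r * x i \<in> R"
    using var_twist i by blast
  have \<sigma>R: "\<sigma> r \<in> R" if "r \<in> R" for r using \<sigma>(1) that unfolding bij_betw_def by blast
  have "(- \<sigma> 0) * x i \<in> R" using \<sigma>(2)[rule_format, OF subring_0[OF R]] by simp
  then have \<sigma>0: "\<sigma> 0 = 0"
    using var_coeff_eq_0[of "- \<sigma> 0" i] \<sigma>R[of 0] i R by (simp add: subring_uminus)
  have comm: "x i * r = \<sigma> r * x i" if r: "r \<in> R" for r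
  proof (cases "r = 0")
    case False
    then obtain c where c: "c \<in> R" "x i * r = c * x i"
      using var_scalar_quasi_commute i r by blast
    then have "(c - \<sigma> r) * x i \<in> R"
      using \<sigma>(2)[rule_format, OF r] by (simp add: left_diff_distrib)
    then have "c - \<sigma> r = 0"
      by (rule var_coeff_eq_0[OF subring_diff[OF R c(1) \<sigma>R[OF r]] i])
    then show ?thesis using c(2) by simp
  qed (simp add: \<sigma>0)
  have \<sigma>mult: "\<sigma> (r * s) = \<sigma> r * \<sigma> s" if "r \<in> R" "s \<in> R" for r s
  proof (rule var_right_cancel[OF _ _ i])
    have "\<sigma> (r * s) * x i = x i * r * s"
      using comm[of "r * s"] that subring_mult[OF R] by (simp add: mult.assoc)
    also have "\<dots> = \<sigma> r * \<sigma> s * x i"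
      using comm that by (simp add: mult.assoc)
    finally show "\<sigma> (r * s) * x i = \<sigma> r * \<sigma> s * x i" .
  qed (use that R in \<open>auto intro: \<sigma>R subring_mult\<close>)
  have \<sigma>1: "\<sigma> 1 = 1"
    using var_right_cancel[OF \<sigma>R[of 1] _ i, of 1] comm[of 1] R by simp
  have "unit_in R (\<sigma> u)" if u: "unit_in R u" for u
  proof -
    obtain v where "u \<in> R" "v \<in> R" "u * v = 1" "v * u = 1" using u unfolding unit_in_def by blast
    then have "\<sigma> u * \<sigma> v = 1" "\<sigma> v * \<sigma> u = 1" using \<sigma>mult \<sigma>1 by metis+
    then show ?thesis unfolding unit_in_def using \<sigma>R \<open>u \<in> R\<close> \<open>v \<in> R\<close> by blast
  qed
  then show ?thesis
    unfolding scalar_twist_def using \<sigma>(1) \<sigma>0 comm by blast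
qed

lemma ex_scalar_twist_mult:
  "(\<exists>\<sigma>. scalar_twist R a \<sigma>) \<Longrightarrow> (\<exists>\<sigma>. scalar_twist R b \<sigma>) \<Longrightarrow> \<exists>\<sigma>. scalar_twist R (a * b) \<sigma>"
  using scalar_twist_mult by blast

lemma var_power_scalar_twist: "k < n \<Longrightarrow> \<exists>\<sigma>. scalar_twist R (x k ^ e) \<sigma>"
  by (rule power_closed[where P="\<lambda>y. \<exists>\<sigma>. scalar_twist R y \<sigma>"])
     (use scalar_twist_1 ex_scalar_twist_mult var_scalar_twist in blast)+

lemma mono_scalar_twist: "\<exists>\<sigma>. scalar_twist R (M g) \<sigma>"
  unfolding mono_def
  by (rule prod_list_map_closed[where P="\<lambda>y. \<exists>\<sigma>. scalar_twist R y \<sigma>"])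
     (use scalar_twist_1 ex_scalar_twist_mult var_power_scalar_twist in auto)

lemma vars_quasi_commute: "\<forall>i<n. \<forall>j<n. \<exists>c\<in>R - {0}. x j * x i = c * x i * x j"
  using quasi_commutative unfolding quasi_commutative_def by (elim conjE)

lemma vars_commutator_unit:
  "\<forall>i j. i < j \<and> j < n \<longrightarrow> (\<forall>c\<in>R - {0}.
     (\<exists>r0\<in>R. \<exists>r. (\<forall>k<n. r k \<in> R) \<and> x j * x i - c * x i * x j = r0 + (\<Sum>k<n. r k * x k))
     \<longrightarrow> (\<exists>d\<in>R. c * d = 1 \<and> d * c = 1))"
  using bijective unfolding bijective_PBW_def by (elim conjE)

lemma var_commutes_up_to_unit:
  assumes "i < k" "k < n"
  shows "commutes_up_to_unit R (x k) (x i)"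
proof -
  obtain c where c: "c \<in> R - {0}" "x k * x i = c * x i * x k"
    using vars_quasi_commute assms less_trans[OF assms] by blast
  have "\<exists>r0\<in>R. \<exists>r. (\<forall>k<n. r k \<in> R) \<and> x k * x i - c * x i * x k = r0 + (\<Sum>k<n. r k * x k)"
    using c(2) subring_0[OF subring] by (intro bexI[of _ 0] exI[of _ "\<lambda>_. 0"]) auto
  then have "\<exists>d\<in>R. c * d = 1 \<and> d * c = 1"
    by (rule vars_commutator_unit[rule_format, OF conjI[OF assms] c(1)])
  then have "unit_in R c" using c(1) unfolding unit_in_def by blast
  then show ?thesis
    unfolding commutes_up_to_unit_def using c(2) by blast
qed

lemma mono_times_var:
  assumes i: "i < n"
  shows "\<exists>u. unit_in R u \<and> M g * x i = u * M (g(i := Suc (g i)))"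
proof -
  define A where "A = prod_list (map (\<lambda>k. x k ^ g k) [0..<i]) * x i ^ g i"
  define B where "B = prod_list (map (\<lambda>k. x k ^ g k) [Suc i..<n])"
  let ?P = "\<lambda>y. (\<exists>\<sigma>. scalar_twist R y \<sigma>) \<and> commutes_up_to_unit R y (x i)"
  have P1: "?P 1" using scalar_twist_1 commutes_up_to_unit_1[OF subring] by blast
  have Pmult: "?P (a * b)" if "?P a" "?P b" for a b
    using that scalar_twist_mult commutes_up_to_unit_mult[OF subring] by blast
  have "?P B" unfolding B_def
  proof (intro prod_list_map_closed[where P="?P"] P1 Pmult ballI)
    fix k assume "k \<in> set [Suc i..<n]"
    then have "i < k" "k < n" by auto
    then show "?P (x k ^ g k)"
      by (intro power_closed[where P="?P"] P1 Pmult)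
         (auto intro: var_scalar_twist var_commutes_up_to_unit)
  qed
  then obtain u where u: "unit_in R u" "B * x i = u * x i * B"
    unfolding commutes_up_to_unit_def by blast
  have "\<exists>\<sigma>. scalar_twist R (prod_list (map (\<lambda>k. x k ^ g k) [0..<i])) \<sigma>"
    using i by (intro prod_list_map_closed[where P="\<lambda>y. \<exists>\<sigma>. scalar_twist R y \<sigma>"] ballI)
      (auto intro: scalar_twist_1 ex_scalar_twist_mult var_power_scalar_twist)
  then obtain \<sigma> where \<sigma>: "scalar_twist R A \<sigma>"
    unfolding A_def using var_power_scalar_twist[OF i] ex_scalar_twist_mult by blast
  have "u \<in> R" using u(1) unfolding unit_in_def by blast
  have "M g * x i = A * (B * x i)" unfolding A_def B_def mono_split[OF i] by (simp add: mult.assoc)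
  also have "\<dots> = (A * u) * (x i * B)" by (simp add: u(2) mult.assoc)
  also have "\<dots> = \<sigma> u * (A * x i * B)"
    using scalar_twist_commute[OF \<sigma> \<open>u \<in> R\<close>] by (simp add: mult.assoc)
  also have "A * x i * B = M (g(i := Suc (g i)))"
  proof -
    have eqs: "map (\<lambda>k. x k ^ (g(i := Suc (g i))) k) [0..<i] = map (\<lambda>k. x k ^ g k) [0..<i]"
      "map (\<lambda>k. x k ^ (g(i := Suc (g i))) k) [Suc i..<n] = map (\<lambda>k. x k ^ g k) [Suc i..<n]"
      by (auto intro: map_cong)
    show ?thesis
      unfolding A_def B_def mono_split[OF i] by (simp only: eqs fun_upd_same power_Suc2 mult.assoc)
  qed
  finally show ?thesis using scalar_twist_unit[OF \<sigma> u(1)] by blast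
qed

lemma mono_times_mono:
  assumes "a \<in> Exps n"
  shows "\<exists>u. unit_in R u \<and> M g * M a = u * M (\<lambda>i. g i + a i)"
  using assms
proof (induction a arbitrary: g rule: measure_induct_rule[where f="\<lambda>a. sum a {..<n}"])
  case (less a)
  show ?case
  proof (cases "\<forall>k<n. a k = 0")
    case True
    have "a k = 0" for k using True less.prems unfolding Exps_def by (cases "k < n") auto
    then have "a = (\<lambda>_. 0)" by (rule ext)
    then show ?thesis using unit_in_1[OF subring] by (intro exI[of _ 1]) (simp add: mono_0)
  next
    case False
    then obtain j where j: "j < n" "a j \<noteq> 0" by blast
    define a' where "a' = a(j := a j - 1)"
    have a': "a' \<in> Exps n" unfolding a'_def using Exps_update less.prems j(1) by blast
    have a_eq: "a = a'(j := Suc (a' j))" unfolding a'_def using j(2) by auto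
    have "sum a' {..<n} < sum a {..<n}"
      using j by (intro sum_strict_mono_ex1) (auto simp: a'_def)
    then obtain u1 where u1: "unit_in R u1" "M g * M a' = u1 * M (\<lambda>i. g i + a' i)"
      using less.IH[OF _ a'] by blast
    obtain w where w: "unit_in R w" "M a' * x j = w * M a"
      using mono_times_var[OF j(1), of a'] unfolding a_eq[symmetric] by blast
    obtain w' where w': "unit_in R w'" "w' * w = 1"
      using unit_in_inverse[OF w(1)] by blast
    obtain \<sigma> where \<sigma>: "scalar_twist R (M g) \<sigma>" using mono_scalar_twist by blast
    have "w' \<in> R" using w'(1) unfolding unit_in_def by blast
    have upd: "(\<lambda>i. g i + a' i)(j := Suc (g j + a' j)) = (\<lambda>i. g i + a i)"
      unfolding a_eq by (auto simp: fun_eq_iff)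
    obtain u2 where u2: "unit_in R u2" "M (\<lambda>i. g i + a' i) * x j = u2 * M (\<lambda>i. g i + a i)"
      using mono_times_var[OF j(1), of "\<lambda>i. g i + a' i"] unfolding upd by blast
    have "M a = w' * M a' * x j" using w(2) w'(2) by (simp add: mult.assoc flip: mult.assoc[of w' w])
    then have "M g * M a = (M g * w') * M a' * x j" by (simp add: mult.assoc)
    also have "\<dots> = \<sigma> w' * (M g * M a') * x j"
      using scalar_twist_commute[OF \<sigma> \<open>w' \<in> R\<close>] by (simp add: mult.assoc)
    also have "\<dots> = (\<sigma> w' * u1 * u2) * M (\<lambda>i. g i + a i)"
      using u1(2) u2(2) by (simp add: mult.assoc)
    finally have "M g * M a = (\<sigma> w' * u1 * u2) * M (\<lambda>i. g i + a i)" .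
    moreover have "unit_in R (\<sigma> w' * u1 * u2)"
      using scalar_twist_unit[OF \<sigma> w'(1)] u1(1) u2(1) by (intro unit_in_mult[OF subring])
    ultimately show ?thesis by blast
  qed
qed

lemma mono_scalar_mono:
  assumes "r \<in> R" "a \<in> Exps n"
  shows "\<exists>\<mu>\<in>R. M g * r * M a = \<mu> * M (\<lambda>i. g i + a i) \<and> (r \<noteq> 0 \<longrightarrow> \<mu> \<noteq> 0)"
proof -
  obtain \<sigma> where \<sigma>: "scalar_twist R (M g) \<sigma>" using mono_scalar_twist by blast
  obtain u where u: "unit_in R u" "M g * M a = u * M (\<lambda>i. g i + a i)"
    using mono_times_mono[OF assms(2)] by blast
  have "M g * r * M a = (\<sigma> r * u) * M (\<lambda>i. g i + a i)"
    using scalar_twist_commute[OF \<sigma> assms(1)] u(2) by (simp add: mult.assoc)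
  moreover have "\<sigma> r * u \<in> R"
    using scalar_twist_in[OF \<sigma> assms(1)] u(1) subring_mult[OF subring] unfolding unit_in_def by blast
  moreover have "\<sigma> r * u \<noteq> 0" if "r \<noteq> 0"
  proof
    assume "\<sigma> r * u = 0"
    then have "\<sigma> r = \<sigma> 0" using unit_in_right_cancel[OF u(1)] \<sigma> unfolding scalar_twist_def by simp
    then show False
      using \<sigma> assms(1) that subring_0[OF subring] unfolding scalar_twist_def bij_betw_def inj_on_def
      by blast
  qed
  ultimately show ?thesis by blast
qed

lemma mono_scalar_mono_onto:
  assumes "s \<in> R" "a \<in> Exps n"
  shows "\<exists>r\<in>R. M g * r * M a = s * M (\<lambda>i. g i + a i)"
proof -
  obtain \<sigma> where \<sigma>: "scalar_twist R (M g) \<sigma>" using mono_scalar_twist by blast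
  obtain u where u: "unit_in R u" "M g * M a = u * M (\<lambda>i. g i + a i)"
    using mono_times_mono[OF assms(2)] by blast
  obtain v where v: "v \<in> R" "v * u = 1" using u(1) unfolding unit_in_def by blast
  have "s * v \<in> R" using subring_mult[OF subring assms(1) v(1)] .
  then obtain r where r: "r \<in> R" "\<sigma> r = s * v"
    using \<sigma> unfolding scalar_twist_def bij_betw_def by (metis imageE)
  have "M g * r * M a = s * (v * u) * M (\<lambda>i. g i + a i)"
    using scalar_twist_commute[OF \<sigma> r(1)] r(2) u(2) by (simp add: mult.assoc)
  then show ?thesis using r(1) v(2) by auto
qed

lemma mono_scalar_mono_eq_0:
  assumes "\<rho> \<in> R" "g \<in> Exps n" "a \<in> Exps n" "M g * \<rho> * M a = 0"
  shows "\<rho> = 0"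
proof (rule ccontr)
  assume "\<rho> \<noteq> 0"
  then obtain \<mu> where "\<mu> \<in> R" "\<mu> \<noteq> 0" "\<mu> * M (\<lambda>i. g i + a i) = 0"
    using mono_scalar_mono[OF assms(1,3), of g] assms(4) by auto
  then show False using term_nonzero Exps_add[OF assms(2,3)] by blast
qed

definition coeff :: "'a \<Rightarrow> (nat \<Rightarrow> nat) \<Rightarrow> 'a" where
  "coeff a = (SOME c. (\<forall>\<alpha>. c \<alpha> \<in> R) \<and> finite {\<alpha>. c \<alpha> \<noteq> 0} \<and> {\<alpha>. c \<alpha> \<noteq> 0} \<subseteq> Exps n \<and>
                      a = (\<Sum>\<alpha>\<in>{\<alpha>. c \<alpha> \<noteq> 0}. c \<alpha> * M \<alpha>))"

lemma coeff_in: "coeff a \<alpha> \<in> R"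
  and finite_coeff_support: "finite {\<alpha>. coeff a \<alpha> \<noteq> 0}"
  and coeff_support_Exps: "{\<alpha>. coeff a \<alpha> \<noteq> 0} \<subseteq> Exps n"
  and coeff_expansion: "a = (\<Sum>\<alpha>\<in>{\<alpha>. coeff a \<alpha> \<noteq> 0}. coeff a \<alpha> * M \<alpha>)"
  using someI_ex[OF mono_spanning[of a]] unfolding coeff_def by blast+

end

section \<open>Homogeneous syzygies\<close>

locale PBW_syzygies = quasi_commutative_bijective_PBW R n x for R :: "'a::ring_1 set" and n x +
  fixes m t :: nat and c :: "nat \<Rightarrow> 'a" and alpha :: "nat \<Rightarrow> nat \<Rightarrow> nat" and idx :: "nat \<Rightarrow> nat"
  assumes left_noetherian: "left_noetherian R" and coeffs: "\<forall>j<t. c j \<in> R - {0}"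
    and exps: "\<forall>j<t. alpha j \<in> Exps n" and idx: "\<forall>j<t. idx j < m"
begin

abbreviation Sy :: "(nat \<Rightarrow> 'a) set" where "Sy \<equiv> Syz x n t c alpha idx"
abbreviation LC :: "(nat \<Rightarrow> 'a) \<Rightarrow> nat \<Rightarrow> 'a" where "LC \<equiv> lin_comb x n t c alpha idx"
abbreviation homogeneous :: "(nat \<Rightarrow> nat) \<Rightarrow> nat \<Rightarrow> (nat \<Rightarrow> 'a) \<Rightarrow> bool" where
  "homogeneous \<equiv> homogeneous_of_degree R x n t alpha idx"

definition hom_syz :: "(nat \<Rightarrow> nat) \<Rightarrow> nat \<Rightarrow> (nat \<Rightarrow> 'a) set" where
  "hom_syz \<beta> k = {h \<in> Sy. homogeneous \<beta> k h}"

lemma Syz_iff: "h \<in> Sy \<longleftrightarrow> (\<forall>j\<ge>t. h j = 0) \<and> (\<forall>k. LC h k = 0)"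
  unfolding Syz_def by (auto simp: fun_eq_iff)

lemma lin_comb_add: "LC (\<lambda>j. g j + h j) k = LC g k + LC h k"
  unfolding lin_comb_def by (simp add: distrib_right sum.distrib)

lemma lin_comb_smult: "LC (\<lambda>j. a * h j) k = a * LC h k"
  unfolding lin_comb_def by (simp add: sum_distrib_left mult.assoc)

lemma lin_comb_sum: "LC (\<lambda>j. \<Sum>p\<in>P. h p j) k = (\<Sum>p\<in>P. LC (h p) k)"
  unfolding lin_comb_def by (simp add: sum_distrib_right sum.swap[of _ P])

lemma Syz_zero: "(\<lambda>_. 0) \<in> Sy"
  unfolding Syz_iff by (simp add: lin_comb_def)

lemma Syz_add: "g \<in> Sy \<Longrightarrow> h \<in> Sy \<Longrightarrow> (\<lambda>j. g j + h j) \<in> Sy"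
  unfolding Syz_iff by (simp add: lin_comb_add)

lemma Syz_smult: "h \<in> Sy \<Longrightarrow> (\<lambda>j. a * h j) \<in> Sy"
  unfolding Syz_iff by (simp add: lin_comb_smult)

lemma homogeneous_term:
  assumes "homogeneous \<beta> k h" "j < t" "h j \<noteq> 0"
  shows "\<exists>r\<in>R. \<exists>\<gamma>\<in>Exps n. h j = r * M \<gamma> \<and> r \<noteq> 0 \<and> idx j = k \<and> (\<lambda>i. \<gamma> i + alpha j i) = \<beta>"
  using assms unfolding homogeneous_of_degree_def by blast

lemma homogeneous_term_times_generator:
  assumes "homogeneous \<beta> k h" "j < t"
  shows "\<exists>\<rho>\<in>R. h j * (c j * M (alpha j)) = \<rho> * M \<beta> \<and> (h j \<noteq> 0 \<longrightarrow> idx j = k)"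
proof (cases "h j = 0")
  case False
  then obtain r \<gamma> where r: "r \<in> R" "h j = r * M \<gamma>" "idx j = k" "(\<lambda>i. \<gamma> i + alpha j i) = \<beta>"
    using homogeneous_term[OF assms] by blast
  obtain \<mu> where "\<mu> \<in> R" "M \<gamma> * c j * M (alpha j) = \<mu> * M \<beta>"
    using mono_scalar_mono[of "c j" "alpha j" \<gamma>] coeffs exps assms(2) r(4) by auto
  then show ?thesis
    using r subring_mult[OF subring] by (intro bexI[of _ "r * \<mu>"]) (auto simp: mult.assoc)
qed (auto intro: bexI[of _ 0] subring_0[OF subring])

lemma homogeneous_lin_comb:
  assumes "homogeneous \<beta> k h"
  shows "\<exists>\<rho>\<in>R. \<forall>k'. LC h k' = (if k' = k then \<rho> * M \<beta> else 0)"
proof -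
  have "\<forall>j\<in>{..<t}. \<exists>\<rho>. \<rho> \<in> R \<and> h j * (c j * M (alpha j)) = \<rho> * M \<beta> \<and> (h j \<noteq> 0 \<longrightarrow> idx j = k)"
    using homogeneous_term_times_generator[OF assms] by blast
  from bchoice[OF this] obtain \<rho> where \<rho>: "\<forall>j\<in>{..<t}. \<rho> j \<in> R \<and>
      h j * (c j * M (alpha j)) = \<rho> j * M \<beta> \<and> (h j \<noteq> 0 \<longrightarrow> idx j = k)"
    by blast
  have "LC h k' = (if k' = k then (\<Sum>j<t. if idx j = k then \<rho> j else 0) * M \<beta> else 0)" for k'
  proof (cases "k' = k")
    case True
    have "LC h k = (\<Sum>j<t. (if idx j = k then \<rho> j else 0) * M \<beta>)"
      unfolding lin_comb_def using \<rho> by (intro sum.cong refl) auto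
    then show ?thesis using True by (simp add: sum_distrib_right)
  next
    case False
    have "h j = 0" if "j < t" "idx j = k'" for j using \<rho> that False by blast
    then have "LC h k' = 0" unfolding lin_comb_def by (intro sum.neutral) auto
    then show ?thesis using False by simp
  qed
  moreover have "(\<Sum>j<t. if idx j = k then \<rho> j else 0) \<in> R"
    using \<rho> subring_0[OF subring] by (intro subring_sum[OF subring]) auto
  ultimately show ?thesis by blast
qed

definition degrees :: "(nat \<Rightarrow> 'a) \<Rightarrow> (nat \<Rightarrow> nat) set" where
  "degrees h = (\<Union>j<t. (\<lambda>\<gamma> i. \<gamma> i + alpha j i) ` {\<gamma>. coeff (h j) \<gamma> \<noteq> 0})"

definition component :: "(nat \<Rightarrow> 'a) \<Rightarrow> (nat \<Rightarrow> nat) \<Rightarrow> nat \<Rightarrow> nat \<Rightarrow> 'a" where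
  "component h \<beta> k j = (if j < t \<and> idx j = k \<and> (\<forall>i. alpha j i \<le> \<beta> i)
     then coeff (h j) (\<lambda>i. \<beta> i - alpha j i) * M (\<lambda>i. \<beta> i - alpha j i) else 0)"

lemma finite_degrees: "finite (degrees h)"
  unfolding degrees_def using finite_coeff_support by blast

lemma degrees_Exps: "degrees h \<subseteq> Exps n"
  unfolding degrees_def using coeff_support_Exps exps Exps_add by blast

lemma component_homogeneous:
  assumes "\<beta> \<in> Exps n"
  shows "homogeneous \<beta> k (component h \<beta> k)"
  unfolding homogeneous_of_degree_def
proof (intro allI impI conjI)
  fix j assume "j < t"
  define \<gamma> where "\<gamma> = (\<lambda>i. \<beta> i - alpha j i)"
  define r where "r = (if idx j = k \<and> (\<forall>i. alpha j i \<le> \<beta> i) then coeff (h j) \<gamma> else 0)"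
  have comp: "component h \<beta> k j = r * M \<gamma>"
    using \<open>j < t\<close> by (simp add: component_def r_def \<gamma>_def)
  have "\<gamma> \<in> Exps n" "r \<in> R"
    unfolding \<gamma>_def r_def using Exps_diff[OF assms] coeff_in subring_0[OF subring] by simp_all
  then show "\<exists>r\<in>R. \<exists>\<gamma>\<in>Exps n. component h \<beta> k j = r * M \<gamma>" using comp by blast
  show "component h \<beta> k j = 0 \<or> (\<exists>r\<in>R. \<exists>\<gamma>\<in>Exps n. component h \<beta> k j = r * M \<gamma> \<and> r \<noteq> 0 \<and>
          idx j = k \<and> (\<lambda>i. \<gamma> i + alpha j i) = \<beta>)"
  proof (cases "r = 0")
    case False
    then have "idx j = k" "(\<lambda>i. \<gamma> i + alpha j i) = \<beta>"
      unfolding r_def \<gamma>_def by (auto split: if_splits simp: fun_eq_iff)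
    then show ?thesis using False comp \<open>\<gamma> \<in> Exps n\<close> \<open>r \<in> R\<close> by blast
  qed (simp add: comp)
qed

lemma sum_components:
  assumes "j < t"
  shows "(\<Sum>\<beta>\<in>degrees h. \<Sum>k<m. component h \<beta> k j) = h j"
proof -
  define S where "S = {\<gamma>. coeff (h j) \<gamma> \<noteq> 0}"
  define shift where "shift \<gamma> = (\<lambda>i. \<gamma> i + alpha j i)" for \<gamma> :: "nat \<Rightarrow> nat"
  define f where "f \<beta> = (if \<forall>i. alpha j i \<le> \<beta> i
     then coeff (h j) (\<lambda>i. \<beta> i - alpha j i) * M (\<lambda>i. \<beta> i - alpha j i) else 0)" for \<beta>
  have "(\<Sum>k<m. component h \<beta> k j) = f \<beta>" for \<beta>
  proof (cases "\<forall>i. alpha j i \<le> \<beta> i")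
    case True
    then show ?thesis using assms idx by (simp add: component_def f_def)
  next
    case False
    then have "component h \<beta> k j = 0" for k by (auto simp: component_def)
    moreover have "f \<beta> = 0" using False unfolding f_def by auto
    ultimately show ?thesis by simp
  qed
  then have "(\<Sum>\<beta>\<in>degrees h. \<Sum>k<m. component h \<beta> k j) = (\<Sum>\<beta>\<in>degrees h. f \<beta>)" by simp
  also have "\<dots> = (\<Sum>\<beta>\<in>shift ` S. f \<beta>)"
  proof (rule sum.mono_neutral_right[OF finite_degrees])
    show "shift ` S \<subseteq> degrees h"
      unfolding degrees_def shift_def S_def using assms by blast
    show "\<forall>\<beta>\<in>degrees h - shift ` S. f \<beta> = 0"
    proof
      fix \<beta> assume \<beta>: "\<beta> \<in> degrees h - shift ` S"
      show "f \<beta> = 0"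
      proof (cases "\<forall>i. alpha j i \<le> \<beta> i")
        case True
        then have "\<beta> = shift (\<lambda>i. \<beta> i - alpha j i)" unfolding shift_def by (simp add: fun_eq_iff)
        then have "(\<lambda>i. \<beta> i - alpha j i) \<notin> S" using \<beta> by auto
        then show ?thesis unfolding f_def S_def by simp
      qed (auto simp: f_def)
    qed
  qed
  also have "\<dots> = (\<Sum>\<gamma>\<in>S. f (shift \<gamma>))"
  proof -
    have "inj_on shift S" unfolding inj_on_def shift_def by (simp add: fun_eq_iff)
    then show ?thesis by (simp add: sum.reindex)
  qed
  also have "\<dots> = (\<Sum>\<gamma>\<in>S. coeff (h j) \<gamma> * M \<gamma>)"
    by (intro sum.cong refl) (simp add: f_def shift_def)
  also have "\<dots> = h j" unfolding S_def by (rule coeff_expansion[symmetric])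
  finally show ?thesis .
qed

lemma syz_sum_components:
  assumes "h \<in> Sy"
  shows "h = (\<lambda>j. \<Sum>\<beta>\<in>degrees h. \<Sum>k<m. component h \<beta> k j)"
proof
  fix j show "h j = (\<Sum>\<beta>\<in>degrees h. \<Sum>k<m. component h \<beta> k j)"
    using sum_components[of j h] assms unfolding Syz_iff by (cases "j < t") (auto simp: component_def)
qed

lemma component_Syz:
  assumes h: "h \<in> Sy" and \<beta>: "\<beta> \<in> degrees h" and "k < m"
  shows "component h \<beta> k \<in> Sy"
proof -
  let ?D = "degrees h"
  have "\<forall>p\<in>?D \<times> {..<m}. \<exists>\<rho>. \<rho> \<in> R \<and>
          (\<forall>k'. LC (component h (fst p) (snd p)) k' = (if k' = snd p then \<rho> * M (fst p) else 0))"
  proof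
    fix p assume "p \<in> ?D \<times> {..<m}"
    then have "fst p \<in> Exps n" using degrees_Exps[of h] by auto
    from homogeneous_lin_comb[OF component_homogeneous[OF this]]
    show "\<exists>\<rho>. \<rho> \<in> R \<and>
          (\<forall>k'. LC (component h (fst p) (snd p)) k' = (if k' = snd p then \<rho> * M (fst p) else 0))"
      by blast
  qed
  from bchoice[OF this] obtain \<rho> where \<rho>: "\<forall>p\<in>?D \<times> {..<m}. \<rho> p \<in> R \<and>
      (\<forall>k'. LC (component h (fst p) (snd p)) k' = (if k' = snd p then \<rho> p * M (fst p) else 0))"
    by blast
  have "0 = LC h k" using h unfolding Syz_iff by simp
  also have "\<dots> = (\<Sum>\<beta>'\<in>?D. \<Sum>k'<m. LC (component h \<beta>' k') k)"
    by (subst syz_sum_components[OF h]) (simp add: lin_comb_sum)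
  also have "\<dots> = (\<Sum>\<beta>'\<in>?D. \<rho> (\<beta>', k) * M \<beta>')"
  proof (intro sum.cong refl)
    fix \<beta>' assume "\<beta>' \<in> ?D"
    then have "LC (component h \<beta>' k') k = (if k' = k then \<rho> (\<beta>', k) * M \<beta>' else 0)" if "k' < m" for k'
      using \<rho> that by auto
    then have "(\<Sum>k'<m. LC (component h \<beta>' k') k) = (\<Sum>k'<m. if k' = k then \<rho> (\<beta>', k) * M \<beta>' else 0)"
      by (intro sum.cong) auto
    then show "(\<Sum>k'<m. LC (component h \<beta>' k') k) = \<rho> (\<beta>', k) * M \<beta>'"
      using \<open>k < m\<close> by simp
  qed
  finally have "\<forall>\<beta>'\<in>?D. \<rho> (\<beta>', k) = 0"
    using \<rho> \<open>k < m\<close> by (intro mono_independent[OF finite_degrees degrees_Exps]) auto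
  then have "LC (component h \<beta> k) k' = 0" for k'
    using \<rho> \<beta> \<open>k < m\<close> by auto
  then show ?thesis unfolding Syz_iff by (simp add: component_def)
qed

definition dividing :: "(nat \<Rightarrow> nat) \<Rightarrow> nat \<Rightarrow> nat set" where
  "dividing \<beta> k = {j. j < t \<and> idx j = k \<and> (\<forall>i. alpha j i \<le> \<beta> i)}"

definition exps_lcm :: "nat set \<Rightarrow> nat \<Rightarrow> nat" where
  "exps_lcm J i = Max (insert 0 ((\<lambda>j. alpha j i) ` J))"

lemma finite_dividing: "finite (dividing \<beta> k)"
  unfolding dividing_def by simp

lemma exps_lcm_Exps: "J \<subseteq> {..<t} \<Longrightarrow> exps_lcm J \<in> Exps n"
  using exps finite_subset[of J "{..<t}"] unfolding Exps_def exps_lcm_def by (auto intro!: Max_eqI)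

lemma exps_lcm_upper: "finite J \<Longrightarrow> j \<in> J \<Longrightarrow> alpha j i \<le> exps_lcm J i"
  unfolding exps_lcm_def by simp

lemma exps_lcm_least: "finite J \<Longrightarrow> \<forall>j\<in>J. alpha j i \<le> \<beta> i \<Longrightarrow> exps_lcm J i \<le> \<beta> i"
  unfolding exps_lcm_def by simp

lemma homogeneous_entry:
  assumes "homogeneous \<beta> k h" "j < t"
  shows "\<exists>r\<in>R. h j = r * M (\<lambda>i. \<beta> i - alpha j i) \<and> (r \<noteq> 0 \<longrightarrow> j \<in> dividing \<beta> k)"
proof (cases "h j = 0")
  case False
  then obtain r \<gamma> where r: "r \<in> R" "h j = r * M \<gamma>" "r \<noteq> 0" "idx j = k" "(\<lambda>i. \<gamma> i + alpha j i) = \<beta>"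
    using homogeneous_term[OF assms] by blast
  then have "\<gamma> = (\<lambda>i. \<beta> i - alpha j i)" "\<forall>i. alpha j i \<le> \<beta> i" by auto
  then show ?thesis using r assms(2) unfolding dividing_def by auto
qed (auto intro: bexI[of _ 0] subring_0[OF subring])

text \<open>Every nonzero entry of a homogeneous syzygy of degree x^\<beta> e_k has the shape
  r x^(\<beta> - alpha j) with j dividing \<beta>, so a common left factor x^(\<beta> - \<beta>') can be split
  off, where \<beta>' is the least common multiple of the dividing alpha j.\<close>
lemma hom_syz_reduce:
  assumes \<beta>: "\<beta> \<in> Exps n" and h: "h \<in> hom_syz \<beta> k"
  defines "\<beta>' \<equiv> exps_lcm (dividing \<beta> k)"
  shows "\<exists>h'\<in>hom_syz \<beta>' k. h = (\<lambda>j. M (\<lambda>i. \<beta> i - \<beta>' i) * h' j)"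
proof -
  define J where "J = dividing \<beta> k"
  define \<delta> where "\<delta> = (\<lambda>i. \<beta> i - \<beta>' i)"
  define gm where "gm j = (\<lambda>i. \<beta>' i - alpha j i)" for j
  have hS: "h \<in> Sy" "homogeneous \<beta> k h" using h unfolding hom_syz_def by auto
  have \<beta>': "\<beta>' \<in> Exps n" unfolding \<beta>'_def by (rule exps_lcm_Exps) (auto simp: dividing_def)
  have upper: "alpha j i \<le> \<beta>' i" if "j \<in> J" for j i
    using exps_lcm_upper[OF finite_dividing] that unfolding \<beta>'_def J_def by blast
  have least: "\<beta>' i \<le> \<beta> i" for i
    unfolding \<beta>'_def by (rule exps_lcm_least[OF finite_dividing]) (auto simp: dividing_def)
  have "\<exists>s. s \<in> R \<and> h j = M \<delta> * (s * M (gm j)) \<and> (s \<noteq> 0 \<longrightarrow> j \<in> J)" for j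
  proof (cases "j < t \<and> h j \<noteq> 0")
    case True
    obtain r where r: "r \<in> R" "h j = r * M (\<lambda>i. \<beta> i - alpha j i)" "r \<noteq> 0 \<longrightarrow> j \<in> J"
      using homogeneous_entry[OF hS(2)] True unfolding J_def by blast
    have "j \<in> J" using r(2,3) True by auto
    have "(\<lambda>i. \<delta> i + gm j i) = (\<lambda>i. \<beta> i - alpha j i)"
      unfolding \<delta>_def gm_def using upper[OF \<open>j \<in> J\<close>] least by (simp add: fun_eq_iff le_add_diff_inverse2)
    then obtain s where "s \<in> R" "M \<delta> * s * M (gm j) = h j"
      using mono_scalar_mono_onto[OF r(1) Exps_diff[OF \<beta>', of "alpha j"], of \<delta>] r(2) unfolding gm_def by auto
    then show ?thesis using \<open>j \<in> J\<close> by (auto simp: mult.assoc)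
  next
    case False
    then have "h j = 0" using hS(1) unfolding Syz_iff by (meson not_le)
    then show ?thesis using subring_0[OF subring] by auto
  qed
  then obtain s where s: "\<forall>j. s j \<in> R \<and> h j = M \<delta> * (s j * M (gm j)) \<and> (s j \<noteq> 0 \<longrightarrow> j \<in> J)"
    by metis
  define h' where "h' j = s j * M (gm j)" for j
  have "homogeneous \<beta>' k h'"
    unfolding homogeneous_of_degree_def
  proof (intro allI impI conjI)
    fix j assume "j < t"
    show "\<exists>r\<in>R. \<exists>\<gamma>\<in>Exps n. h' j = r * M \<gamma>"
      using s Exps_diff[OF \<beta>'] unfolding h'_def gm_def by blast
    show "h' j = 0 \<or> (\<exists>r\<in>R. \<exists>\<gamma>\<in>Exps n. h' j = r * M \<gamma> \<and> r \<noteq> 0 \<and> idx j = k \<and>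
            (\<lambda>i. \<gamma> i + alpha j i) = \<beta>')"
    proof (cases "s j = 0")
      case False
      then have "j \<in> J" using s by blast
      then have "idx j = k" "(\<lambda>i. gm j i + alpha j i) = \<beta>'"
        using upper unfolding J_def dividing_def gm_def by (auto simp: fun_eq_iff)
      then show ?thesis using False s Exps_diff[OF \<beta>'] unfolding h'_def gm_def by blast
    qed (simp add: h'_def)
  qed
  moreover have "h' \<in> Sy"
  proof -
    obtain \<rho> where \<rho>: "\<rho> \<in> R" "\<forall>k'. LC h' k' = (if k' = k then \<rho> * M \<beta>' else 0)"
      using homogeneous_lin_comb[OF calculation] by blast
    have "h = (\<lambda>j. M \<delta> * h' j)" using s unfolding h'_def by auto
    then have "M \<delta> * LC h' k = 0" using hS(1) unfolding Syz_iff by (metis lin_comb_smult)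
    then have "M \<delta> * \<rho> * M \<beta>' = 0" using \<rho>(2) by (simp add: mult.assoc)
    then have "\<rho> = 0" using mono_scalar_mono_eq_0[OF \<rho>(1) Exps_diff[OF \<beta>] \<beta>'] unfolding \<delta>_def by blast
    moreover have "s j = 0" if "j \<ge> t" for j using s that unfolding J_def dividing_def by auto
    ultimately show ?thesis unfolding Syz_iff using \<rho>(2) by (simp add: h'_def)
  qed
  ultimately show ?thesis
    using s unfolding hom_syz_def h'_def \<delta>_def by (auto simp: fun_eq_iff)
qed

text \<open>The homogeneous syzygies of a fixed degree x^\<beta> e_k are determined by their coefficient
  vectors in R^J, J = dividing \<beta> k, and these form a left R-submodule of R^J.\<close>
lemma hom_syz_finitely_generated:
  assumes \<beta>: "\<beta> \<in> Exps n"
  shows "\<exists>G. finite G \<and> G \<subseteq> hom_syz \<beta> k \<and> generates R G (hom_syz \<beta> k)"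
proof -
  define J where "J = dividing \<beta> k"
  define embed :: "(nat \<Rightarrow> 'a) \<Rightarrow> nat \<Rightarrow> 'a" where "embed v j = v j * M (\<lambda>i. \<beta> i - alpha j i)" for v j
  define N where "N = {v. (\<forall>j. v j \<in> R \<and> (j \<notin> J \<longrightarrow> v j = 0)) \<and> embed v \<in> Sy}"
  have "embed (\<lambda>j. v j + w j) = (\<lambda>j. embed v j + embed w j)"
    "embed (\<lambda>j. r * v j) = (\<lambda>j. r * embed v j)"
    "embed (\<lambda>_. 0) = (\<lambda>_. 0)" for v w r
    by (simp_all add: embed_def fun_eq_iff distrib_right mult.assoc)
  then have "left_submodule R N"
    using subring_0[OF subring] subring_add[OF subring] subring_mult[OF subring]
    unfolding left_submodule_def N_def by (auto intro: Syz_zero Syz_add Syz_smult)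
  moreover have "\<forall>v\<in>N. \<forall>j. v j \<in> R \<and> (j \<notin> J \<longrightarrow> v j = 0)" unfolding N_def by blast
  ultimately have "\<exists>F. finite F \<and> F \<subseteq> N \<and> generates R F N"
    using finite_dividing unfolding J_def
    by (intro left_noetherian_submodule_finitely_generated[OF subring left_noetherian])
  then obtain F where F: "finite F" "F \<subseteq> N" "generates R F N" by blast
  have hom: "embed v \<in> hom_syz \<beta> k" if "v \<in> N" for v
    unfolding hom_syz_def homogeneous_of_degree_def
  proof (intro CollectI conjI allI impI)
    show "embed v \<in> Sy" using that unfolding N_def by blast
    fix j assume "j < t"
    have v: "v j \<in> R" "v j \<noteq> 0 \<longrightarrow> j \<in> J" using that unfolding N_def by blast+
    show "\<exists>r\<in>R. \<exists>\<gamma>\<in>Exps n. embed v j = r * M \<gamma>"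
      using v(1) Exps_diff[OF \<beta>] unfolding embed_def by blast
    show "embed v j = 0 \<or> (\<exists>r\<in>R. \<exists>\<gamma>\<in>Exps n. embed v j = r * M \<gamma> \<and> r \<noteq> 0 \<and> idx j = k \<and>
            (\<lambda>i. \<gamma> i + alpha j i) = \<beta>)"
    proof (cases "v j = 0")
      case False
      then have "idx j = k" "(\<lambda>i. \<beta> i - alpha j i + alpha j i) = \<beta>"
        using v(2) unfolding J_def dividing_def by (auto simp: fun_eq_iff)
      then show ?thesis using False v(1) Exps_diff[OF \<beta>] unfolding embed_def by blast
    qed (simp add: embed_def)
  qed
  show ?thesis
  proof (intro exI conjI)
    show "finite (embed ` F)" using F(1) by blast
    show "embed ` F \<subseteq> hom_syz \<beta> k" using F(2) hom by blast
    show "generates R (embed ` F) (hom_syz \<beta> k)"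
      unfolding generates_def
    proof
      fix h assume h: "h \<in> hom_syz \<beta> k"
      then have hS: "h \<in> Sy" "homogeneous \<beta> k h" unfolding hom_syz_def by auto
      have "\<exists>r. r \<in> R \<and> h j = r * M (\<lambda>i. \<beta> i - alpha j i) \<and> (r \<noteq> 0 \<longrightarrow> j \<in> J)" for j
      proof (cases "j < t")
        case True
        then obtain r where "r \<in> R" "h j = r * M (\<lambda>i. \<beta> i - alpha j i)" "r \<noteq> 0 \<longrightarrow> j \<in> J"
          using homogeneous_entry[OF hS(2)] unfolding J_def by blast
        then show ?thesis by blast
      next
        case False
        then have "h j = 0" using hS(1) unfolding Syz_iff by simp
        then show ?thesis using subring_0[OF subring] by auto
      qed
      then obtain v where v: "\<forall>j. v j \<in> R \<and> h j = v j * M (\<lambda>i. \<beta> i - alpha j i) \<and> (v j \<noteq> 0 \<longrightarrow> j \<in> J)"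
        by metis
      then have "h = embed v" unfolding embed_def by auto
      moreover have "\<forall>j. v j \<in> R \<and> (j \<notin> J \<longrightarrow> v j = 0)" using v by blast
      ultimately have "v \<in> N" unfolding N_def using hS(1) by simp
      then obtain r where r: "\<forall>f. r f \<in> R" "v = lcomb r F"
        using F(3) unfolding generates_def by blast
      have "h = (\<lambda>j. \<Sum>f\<in>F. r f * embed f j)"
        unfolding \<open>h = embed v\<close> r(2) embed_def lcomb_def by (simp add: sum_distrib_right mult.assoc)
      also have "\<dots> = lcomb (\<lambda>g. \<Sum>f\<in>{f\<in>F. embed f = g}. r f) (embed ` F)"
        by (rule lcomb_image[OF F(1)])
      finally have "h = lcomb (\<lambda>g. \<Sum>f\<in>{f\<in>F. embed f = g}. r f) (embed ` F)" .
      moreover have "(\<Sum>f\<in>{f\<in>F. embed f = g}. r f) \<in> R" for g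
        by (rule subring_sum[OF subring]) (use r(1) in blast)
      ultimately show "\<exists>a. (\<forall>g. a g \<in> R) \<and> h = lcomb a (embed ` F)"
        by (intro exI[of _ "\<lambda>g. \<Sum>f\<in>{f\<in>F. embed f = g}. r f"]) blast
    qed
  qed
qed

lemma Syz_in_span_of_homogeneous_span:
  assumes "h \<in> Sy" and hom: "\<And>\<beta> k g. \<beta> \<in> Exps n \<Longrightarrow> k < m \<Longrightarrow> g \<in> hom_syz \<beta> k \<Longrightarrow> \<exists>a. g = lcomb a S"
  shows "\<exists>a. h = lcomb a S"
proof -
  have "\<forall>\<beta>\<in>degrees h. \<forall>k\<in>{..<m}. \<exists>a. component h \<beta> k = lcomb a S"
    using hom component_Syz[OF assms(1)] component_homogeneous degrees_Exps
    unfolding hom_syz_def by blast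
  then obtain a where a: "\<forall>\<beta>\<in>degrees h. \<forall>k\<in>{..<m}. component h \<beta> k = lcomb (a \<beta> k) S"
    by metis
  have "h = (\<lambda>j. \<Sum>\<beta>\<in>degrees h. \<Sum>k<m. lcomb (a \<beta> k) S j)"
    using a by (subst syz_sum_components[OF assms(1)]) simp
  also have "\<dots> = lcomb (\<lambda>s. \<Sum>\<beta>\<in>degrees h. \<Sum>k<m. a \<beta> k s) S"
    by (simp add: sum_lcomb)
  finally show ?thesis by blast
qed

lemma hom_syz_in_span:
  assumes "\<beta> \<in> Exps n" "k < m" "h \<in> hom_syz \<beta> k" "finite S"
    and gen: "\<forall>q\<in>exps_lcm ` Pow {..<t} \<times> {..<m}. G q \<subseteq> S \<and> generates R (G q) (hom_syz (fst q) (snd q))"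
  shows "\<exists>a. h = lcomb a S"
proof -
  define \<beta>' where "\<beta>' = exps_lcm (dividing \<beta> k)"
  obtain h' where h': "h' \<in> hom_syz \<beta>' k" "h = (\<lambda>j. M (\<lambda>i. \<beta> i - \<beta>' i) * h' j)"
    using hom_syz_reduce[OF assms(1,3)] unfolding \<beta>'_def by blast
  have "(\<beta>', k) \<in> exps_lcm ` Pow {..<t} \<times> {..<m}"
    unfolding \<beta>'_def dividing_def using assms(2) by blast
  then obtain r where "G (\<beta>', k) \<subseteq> S" "h' = lcomb r (G (\<beta>', k))"
    using gen h'(1) unfolding generates_def by fastforce
  then have "h = lcomb (\<lambda>g. M (\<lambda>i. \<beta> i - \<beta>' i) * r g) (G (\<beta>', k))"
    using h'(2) lcomb_scale by metis
  then show ?thesis using lcomb_extend[OF assms(4) \<open>G (\<beta>', k) \<subseteq> S\<close>] by metis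
qed

theorem Syz_homogeneous_generators:
  "\<exists>S. finite S \<and> S \<subseteq> Sy \<and> (\<forall>s\<in>S. homogeneous_syz R x n m t alpha idx s) \<and> (\<forall>h\<in>Sy. \<exists>a. h = lcomb a S)"
proof -
  define Q where "Q = exps_lcm ` Pow {..<t} \<times> {..<m}"
  have Q: "finite Q" "\<forall>q\<in>Q. fst q \<in> Exps n \<and> snd q < m"
    unfolding Q_def using exps_lcm_Exps by auto
  then have "\<forall>q\<in>Q. \<exists>G. finite G \<and> G \<subseteq> hom_syz (fst q) (snd q) \<and> generates R G (hom_syz (fst q) (snd q))"
    using hom_syz_finitely_generated by blast
  then obtain G where G: "\<forall>q\<in>Q. finite (G q) \<and> G q \<subseteq> hom_syz (fst q) (snd q) \<and>
                                 generates R (G q) (hom_syz (fst q) (snd q))"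
    by metis
  define S where "S = (\<Union>q\<in>Q. G q)"
  show ?thesis
  proof (intro exI[of _ S] conjI ballI)
    show "finite S" unfolding S_def using Q(1) G by blast
    have "hom_syz \<beta> k \<subseteq> Sy" for \<beta> k unfolding hom_syz_def by blast
    then show "S \<subseteq> Sy" unfolding S_def using G by blast
    show "homogeneous_syz R x n m t alpha idx s" if "s \<in> S" for s
      using that Q(2) G unfolding S_def hom_syz_def homogeneous_syz_def by blast
    show "\<exists>a. h = lcomb a S" if "h \<in> Sy" for h
      using Syz_in_span_of_homogeneous_span[OF that] hom_syz_in_span \<open>finite S\<close> G
      unfolding S_def Q_def by blast
  qed
qed

end

theorem proposition36:
  fixes R :: "'a::ring_1 set" and n m t :: nat and x :: "nat \<Rightarrow> 'a"
    and c :: "nat \<Rightarrow> 'a" and alpha :: "nat \<Rightarrow> nat \<Rightarrow> nat" and idx :: "nat \<Rightarrow> nat"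
  assumes "sigma_PBW R n x" and "quasi_commutative R n x" and "bijective_PBW R n x"
    and "left_noetherian R"
    and "\<forall>j<t. c j \<in> R - {0}"
    and "\<forall>j<t. alpha j \<in> Exps n"
    and "\<forall>j<t. idx j < m"
  shows "\<exists>S. finite S \<and> S \<subseteq> Syz x n t c alpha idx \<and>
           (\<forall>s\<in>S. homogeneous_syz R x n m t alpha idx s) \<and>
           (\<forall>h\<in>Syz x n t c alpha idx. \<exists>a. h = (\<lambda>j. \<Sum>s\<in>S. a s * s j))"
proof -
  interpret PBW_syzygies R n x m t c alpha idx
    by (intro PBW_syzygies.intro quasi_commutative_bijective_PBW.intro PBW_syzygies_axioms.intro)
       (fact assms)+
  show ?thesis using Syz_homogeneous_generators unfolding lcomb_def .
qed

end
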